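(* For every integer $n\ge 4$, $\mathrm{mob}(L(K_n))=n-2$.
   Context: $L(K_n)$ is the line graph of the complete graph $K_n$: its vertices are the edges of $K_n$, two being adjacent iff they share an endpoint. A set $S$ of vertices is a general position set if no three distinct vertices of $S$ lie on a common shortest path. Place one robot on each vertex of a general position set $S$; robots move one at a time, and a move is legal if a robot moves to an adjacent unoccupied vertex and the new set of occupied vertices is again a general position set. $S$ is a mobile general position set if some finite sequence of legal moves results in every vertex being occupied by some robot at some moment. $\mathrm{mob}$ of a graph is the maximum cardinality of a mobile general position set of it. *)

theory Defs
  imports Main
begin

fun walk :: "'a set \<Rightarrow> ('a \<Rightarrow> 'a \<Rightarrow> bool) \<Rightarrow> 'a list \<Rightarrow> bool" where
  "walk V E [] = False"
| "walk V E [x] = (x \<in> V)"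
| "walk V E (x # y # xs) = (x \<in> V \<and> E x y \<and> walk V E (y # xs))"

definition gdist :: "'a set \<Rightarrow> ('a \<Rightarrow> 'a \<Rightarrow> bool) \<Rightarrow> 'a \<Rightarrow> 'a \<Rightarrow> nat" where
  "gdist V E u v = (LEAST k. \<exists>xs. walk V E xs \<and> hd xs = u \<and> last xs = v \<and> length xs = Suc k)"

definition shortest_path :: "'a set \<Rightarrow> ('a \<Rightarrow> 'a \<Rightarrow> bool) \<Rightarrow> 'a list \<Rightarrow> bool" where
  "shortest_path V E P \<longleftrightarrow> walk V E P \<and> distinct P \<and>
     length P = Suc (gdist V E (hd P) (last P))"

definition gp_set :: "'a set \<Rightarrow> ('a \<Rightarrow> 'a \<Rightarrow> bool) \<Rightarrow> 'a set \<Rightarrow> bool" where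
  "gp_set V E S \<longleftrightarrow> S \<subseteq> V \<and>
     (\<forall>x\<in>S. \<forall>y\<in>S. \<forall>z\<in>S. x \<noteq> y \<and> y \<noteq> z \<and> x \<noteq> z \<longrightarrow>
        \<not> (\<exists>P. shortest_path V E P \<and> x \<in> set P \<and> y \<in> set P \<and> z \<in> set P))"

definition legal_move :: "'a set \<Rightarrow> ('a \<Rightarrow> 'a \<Rightarrow> bool) \<Rightarrow> 'a set \<Rightarrow> 'a set \<Rightarrow> bool" where
  "legal_move V E S S' \<longleftrightarrow> (\<exists>u v. u \<in> S \<and> v \<in> V \<and> v \<notin> S \<and> E u v \<and>
       S' = insert v (S - {u}) \<and> gp_set V E S')"

definition mobile_gp_set :: "'a set \<Rightarrow> ('a \<Rightarrow> 'a \<Rightarrow> bool) \<Rightarrow> 'a set \<Rightarrow> bool" where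
  "mobile_gp_set V E S \<longleftrightarrow> gp_set V E S \<and>
     (\<exists>ts :: 'a set list. ts \<noteq> [] \<and> hd ts = S \<and>
        (\<forall>i. Suc i < length ts \<longrightarrow> legal_move V E (ts ! i) (ts ! Suc i)) \<and>
        V \<subseteq> \<Union> (set ts))"

definition mob :: "'a set \<Rightarrow> ('a \<Rightarrow> 'a \<Rightarrow> bool) \<Rightarrow> nat" where
  "mob V E = Max (card ` {S. mobile_gp_set V E S})"

definition Kn_edges :: "nat \<Rightarrow> nat set set" where
  "Kn_edges n = {{a, b} | a b. a < n \<and> b < n \<and> a \<noteq> b}"

definition line_adj :: "nat set \<Rightarrow> nat set \<Rightarrow> bool" where
  "line_adj e f \<longleftrightarrow> e \<noteq> f \<and> e \<inter> f \<noteq> {}"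

end

theory Submission
  imports Defs
begin

(* In L(K_n) any two vertices are at distance at most 2, so three of them lie on a common
   shortest path exactly when they are the edges of a path a-b-c-d in K_n.  General position
   sets are therefore the P4-free edge sets S, whose components are triangles and stars; hence
   |S| <= n, and |S| <= n - 2 as soon as S has two non-adjacent star centres.

   If a mobile set had at least n - 1 edges, every legal move {x,y} -> {y,z} would have to
   close a triangle ({x,z} in S), so moves never join components of S.  Since every edge of
   K_n is occupied at some time, S would be connected, and for n >= 4 a connected P4-free
   graph admits no triangle-closing move.  Conversely, a star at c missing one leaf w is
   mobile: changing the missing leaf, or moving a star edge {c,l} to {l,w}, reaches every edge
   of K_n, and legal moves can be undone. *)

section \<open>Walks, distances and mobility in an arbitrary graph\<close>

lemma walk_not_Nil: "walk V E xs \<Longrightarrow> xs \<noteq> []"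
  by (cases xs) auto

lemma set_walk_subset: "walk V E xs \<Longrightarrow> set xs \<subseteq> V"
  by (induction V E xs rule: walk.induct) auto

lemma gdist_le_length: "walk V E xs \<Longrightarrow> gdist V E (hd xs) (last xs) \<le> length xs - 1"
  unfolding gdist_def by (rule Least_le) (use walk_not_Nil in fastforce)

lemma gdist_attained:
  assumes "walk V E xs" "hd xs = u" "last xs = v"
  obtains ys where "walk V E ys" "hd ys = u" "last ys = v" "length ys = Suc (gdist V E u v)"
proof -
  have "\<exists>k ys. walk V E ys \<and> hd ys = u \<and> last ys = v \<and> length ys = Suc k"
    using assms walk_not_Nil[OF assms(1)] by (intro exI[of _ "length xs - 1"] exI[of _ xs]) auto
  from LeastI_ex[OF this] show ?thesis using that unfolding gdist_def by blast
qed

lemma legal_move_reverse: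
  assumes sym: "\<And>u v. E u v \<Longrightarrow> E v u" and gp: "gp_set V E S" and move: "legal_move V E S S'"
  shows "legal_move V E S' S"
proof -
  obtain u v where uv: "u \<in> S" "v \<in> V" "v \<notin> S" "E u v" "S' = insert v (S - {u})" "gp_set V E S'"
    using move unfolding legal_move_def by blast
  have "u \<in> V" using gp uv(1) unfolding gp_set_def by blast
  moreover have "S = insert u (S' - {v})" using uv by auto
  ultimately show ?thesis
    unfolding legal_move_def using uv sym gp by (intro exI[of _ v] exI[of _ u]) auto
qed

lemma mobile_gp_set_legal_move:
  assumes "mobile_gp_set V E S" "\<not> V \<subseteq> S"
  obtains S' where "legal_move V E S S'"
proof -
  obtain ts where ts: "ts \<noteq> []" "hd ts = S"
    "\<And>i. Suc i < length ts \<Longrightarrow> legal_move V E (ts ! i) (ts ! Suc i)" "V \<subseteq> \<Union> (set ts)"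
    using assms(1) unfolding mobile_gp_set_def by blast
  obtain v where v: "v \<in> V" "v \<notin> S" using assms(2) by blast
  then obtain T where "T \<in> set ts" "v \<in> T" using ts(4) by blast
  then obtain i where i: "i < length ts" "v \<in> ts ! i" by (metis in_set_conv_nth)
  have ts0: "ts ! 0 = S" using ts(1,2) by (simp add: hd_conv_nth)
  then have "i \<noteq> 0" using i(2) v(2) by metis
  then show thesis using that ts(3)[of 0] i(1) ts0 by simp
qed

lemma closed_tour_through_reachable:
  assumes sym: "\<And>u v. E u v \<Longrightarrow> E v u"
    and "(legal_move V E)\<^sup>*\<^sup>* S T" "gp_set V E S"
  shows "\<exists>ts. ts \<noteq> [] \<and> hd ts = S \<and> last ts = S \<and> successively (legal_move V E) ts \<and> T \<in> set ts"
  using assms(2,3)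
proof (induction rule: converse_rtranclp_induct)
  case base
  then show ?case by (intro exI[of _ "[T]"]) simp
next
  case (step S S1)
  then have "gp_set V E S1" unfolding legal_move_def by blast
  then obtain ts where ts: "ts \<noteq> []" "hd ts = S1" "last ts = S1"
    "successively (legal_move V E) ts" "T \<in> set ts"
    using step.IH by blast
  have "legal_move V E S1 S" using legal_move_reverse[OF sym step.prems step.hyps(1)] .
  have "successively (legal_move V E) (S # ts)"
    using ts(1,2,4) step.hyps(1) by (simp add: successively_Cons)
  then have "successively (legal_move V E) ((S # ts) @ [S])"
    using ts(1,3) \<open>legal_move V E S1 S\<close> by (subst successively_append_iff) simp
  then show ?case using ts(5) by (intro exI[of _ "(S # ts) @ [S]"]) simp
qed

lemma closed_tours_concat:
  assumes "finite F"
    and "\<And>v. v \<in> F \<Longrightarrow> \<exists>ts. ts \<noteq> [] \<and> hd ts = S \<and> last ts = S \<and> successively P ts \<and> v \<in> \<Union> (set ts)"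
  shows "\<exists>ts. ts \<noteq> [] \<and> hd ts = S \<and> last ts = S \<and> successively P ts \<and> F \<subseteq> \<Union> (set ts)"
  using assms
proof (induction F rule: finite_induct)
  case empty
  show ?case by (intro exI[of _ "[S]"]) simp
next
  case (insert v F)
  obtain ts where ts: "ts \<noteq> []" "hd ts = S" "last ts = S" "successively P ts" "F \<subseteq> \<Union> (set ts)"
    using insert by blast
  obtain us where us: "us \<noteq> []" "hd us = S" "last us = S" "successively P us" "v \<in> \<Union> (set us)"
    using insert.prems by blast
  then obtain rest where us_rest: "us = S # rest" by (cases us) auto
  then have rest: "rest = [] \<or> P S (hd rest)" "successively P rest"
    using us(4) by (auto simp: successively_Cons)
  have "successively P (ts @ rest)"
    using ts(3,4) rest by (subst successively_append_iff) auto
  moreover have "last (ts @ rest) = S" using ts(3) us(3) us_rest by (cases "rest = []") auto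
  moreover have "S \<in> set ts" using ts(1,3) last_in_set by metis
  then have "insert v F \<subseteq> \<Union> (set (ts @ rest))"
    using ts(5) us(5) us_rest by auto
  ultimately show ?case using ts(1,2) by (intro exI[of _ "ts @ rest"]) auto
qed

lemma mobile_gp_setI:
  assumes "finite V" "\<And>u v. E u v \<Longrightarrow> E v u" "gp_set V E S"
    and reach: "\<And>v. v \<in> V \<Longrightarrow> \<exists>T. (legal_move V E)\<^sup>*\<^sup>* S T \<and> v \<in> T"
  shows "mobile_gp_set V E S"
proof -
  have "\<exists>ts. ts \<noteq> [] \<and> hd ts = S \<and> last ts = S \<and> successively (legal_move V E) ts \<and> v \<in> \<Union> (set ts)"
    if "v \<in> V" for v
    using reach[OF that] closed_tour_through_reachable[OF assms(2) _ assms(3)] by blast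
  then obtain ts where "ts \<noteq> []" "hd ts = S" "successively (legal_move V E) ts" "V \<subseteq> \<Union> (set ts)"
    using closed_tours_concat[OF assms(1)] by metis
  then show ?thesis
    unfolding mobile_gp_set_def using assms(3) successively_nth by blast
qed

section \<open>General position in the line graph of a complete graph\<close>

definition complete_edges :: "'a set \<Rightarrow> 'a set set" where
  "complete_edges X = {{a, b} | a b. a \<in> X \<and> b \<in> X \<and> a \<noteq> b}"

lemma complete_edges_iff: "e \<in> complete_edges X \<longleftrightarrow> (\<exists>a b. a \<in> X \<and> b \<in> X \<and> a \<noteq> b \<and> e = {a, b})"
  unfolding complete_edges_def by blast

lemma doubleton_in_complete_edges_iff [simp]: "{a, b} \<in> complete_edges X \<longleftrightarrow> a \<in> X \<and> b \<in> X \<and> a \<noteq> b"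
  unfolding complete_edges_iff by (auto simp: doubleton_eq_iff)

lemma edge_complete_edgesD:
  "S \<subseteq> complete_edges X \<Longrightarrow> {a, b} \<in> S \<Longrightarrow> a \<in> X \<and> b \<in> X \<and> a \<noteq> b"
  by (metis doubleton_in_complete_edges_iff subsetD)

lemma complete_edges_elim:
  assumes "e \<in> complete_edges X" "u \<in> e"
  obtains v where "e = {u, v}" "u \<in> X" "v \<in> X" "u \<noteq> v"
  using assms unfolding complete_edges_iff by (auto simp: insert_commute)

lemma finite_complete_edges: "finite X \<Longrightarrow> finite (complete_edges X)"
  by (rule finite_subset[of _ "Pow X"]) (auto simp: complete_edges_iff)

definition P4_free :: "'a set set \<Rightarrow> bool" where
  "P4_free S \<longleftrightarrow> \<not> (\<exists>a b c d. distinct [a, b, c, d] \<and> {a, b} \<in> S \<and> {b, c} \<in> S \<and> {c, d} \<in> S)"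

lemma P4_freeD:
  "P4_free S \<Longrightarrow> distinct [a, b, c, d] \<Longrightarrow> {a, b} \<in> S \<Longrightarrow> {b, c} \<in> S \<Longrightarrow> {c, d} \<in> S \<Longrightarrow> False"
  unfolding P4_free_def by blast

lemma P4_free_subset: "P4_free S \<Longrightarrow> T \<subseteq> S \<Longrightarrow> P4_free T"
  unfolding P4_free_def by blast

lemma P4_free_iff_edge_triples:
  assumes "S \<subseteq> complete_edges X"
  shows "P4_free S \<longleftrightarrow>
    (\<forall>e\<in>S. \<forall>f\<in>S. \<forall>g\<in>S. e \<inter> f \<noteq> {} \<longrightarrow> f \<inter> g \<noteq> {} \<longrightarrow> e \<inter> g \<noteq> {})"
proof
  assume P4: "P4_free S"
  show "\<forall>e\<in>S. \<forall>f\<in>S. \<forall>g\<in>S. e \<inter> f \<noteq> {} \<longrightarrow> f \<inter> g \<noteq> {} \<longrightarrow> e \<inter> g \<noteq> {}"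
  proof (intro ballI impI notI)
    fix e f g assume efg: "e \<in> S" "f \<in> S" "g \<in> S" "e \<inter> f \<noteq> {}" "f \<inter> g \<noteq> {}" "e \<inter> g = {}"
    obtain b where b: "b \<in> e" "b \<in> f" using efg(4) by blast
    obtain c where c: "c \<in> f" "c \<in> g" using efg(5) by blast
    obtain a where a: "e = {a, b}" "a \<noteq> b"
      using assms efg(1) b(1) by (fastforce simp: complete_edges_iff)
    obtain d where d: "g = {c, d}" "c \<noteq> d"
      using assms efg(3) c(2) by (fastforce simp: complete_edges_iff)
    have "b \<noteq> c" using b c efg(6) by blast
    then have "f = {b, c}" using assms efg(2) b(2) c(1) by (fastforce simp: complete_edges_iff)
    moreover have "distinct [a, b, c, d]" using a d \<open>b \<noteq> c\<close> efg(6) by auto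
    ultimately show False using P4_freeD[OF P4] efg a d by blast
  qed
next
  assume triples: "\<forall>e\<in>S. \<forall>f\<in>S. \<forall>g\<in>S. e \<inter> f \<noteq> {} \<longrightarrow> f \<inter> g \<noteq> {} \<longrightarrow> e \<inter> g \<noteq> {}"
  show "P4_free S"
    unfolding P4_free_def
  proof (intro notI, elim exE conjE)
    fix a b c d assume "distinct [a, b, c, d]" "{a, b} \<in> S" "{b, c} \<in> S" "{c, d} \<in> S"
    then show False using triples[rule_format, of "{a, b}" "{b, c}" "{c, d}"] by auto
  qed
qed

lemma not_P4_free_complete_edges:
  assumes "4 \<le> card X"
  shows "\<not> P4_free (complete_edges X)"
proof -
  obtain T where "T \<subseteq> X" "card T = 4" using obtain_subset_with_card_n[OF assms] by blast
  then have "\<exists>a b c d. distinct [a, b, c, d] \<and> {a, b, c, d} \<subseteq> X"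
    by (simp add: numeral_eq_Suc card_Suc_eq) blast
  then obtain a b c d where "distinct [a, b, c, d]" "{a, b, c, d} \<subseteq> X" by blast
  then show ?thesis using P4_freeD[of "complete_edges X" a b c d] by auto
qed

lemma gdist_line_adj_disjoint:
  assumes "e \<in> complete_edges X" "g \<in> complete_edges X" "e \<inter> g = {}"
  shows "gdist (complete_edges X) line_adj e g = 2"
proof -
  obtain a b where ab: "a \<in> X" "b \<in> X" "a \<noteq> b" "e = {a, b}" using assms(1) complete_edges_iff by metis
  obtain c d where cd: "c \<in> X" "d \<in> X" "c \<noteq> d" "g = {c, d}" using assms(2) complete_edges_iff by metis
  have "b \<noteq> c" using ab cd assms(3) by auto
  then have w: "walk (complete_edges X) line_adj [e, {b, c}, g]"
    using assms ab cd unfolding line_adj_def by auto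
  obtain ys where ys: "walk (complete_edges X) line_adj ys" "hd ys = e" "last ys = g"
    "length ys = Suc (gdist (complete_edges X) line_adj e g)"
    using gdist_attained[OF w] by auto
  have "length ys \<noteq> 1"
  proof
    assume "length ys = 1"
    then obtain y where "ys = [y]" by (cases ys) auto
    then show False using ys(2,3) assms(3) ab(4) by auto
  qed
  moreover have "length ys \<noteq> 2"
  proof
    assume "length ys = 2"
    then obtain y1 y2 where "ys = [y1, y2]" by (cases ys; cases "tl ys") auto
    then show False using ys(1-3) assms(3) unfolding line_adj_def by simp
  qed
  moreover have "gdist (complete_edges X) line_adj e g \<le> 2"
    using gdist_le_length[OF w] by simp
  ultimately show ?thesis using ys(4) by linarith
qed

lemma gdist_line_adj_le_2:
  assumes "e \<in> complete_edges X" "g \<in> complete_edges X"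
  shows "gdist (complete_edges X) line_adj e g \<le> 2"
proof (cases "e \<inter> g = {}")
  case True
  then show ?thesis using gdist_line_adj_disjoint[OF assms] by simp
next
  case False
  show ?thesis
  proof (cases "e = g")
    case True
    have "walk (complete_edges X) line_adj [e]" using assms(1) by simp
    from gdist_le_length[OF this] show ?thesis using True by simp
  next
    case ne: False
    have "walk (complete_edges X) line_adj [e, g]"
      using assms False ne unfolding line_adj_def by simp
    from gdist_le_length[OF this] show ?thesis by simp
  qed
qed

lemma shortest_path_line_adj_cases:
  assumes sp: "shortest_path (complete_edges X) line_adj P" and len: "3 \<le> length P"
  obtains e f g where "P = [e, f, g]" "e \<inter> f \<noteq> {}" "f \<inter> g \<noteq> {}" "e \<inter> g = {}"
proof -
  have w: "walk (complete_edges X) line_adj P" and dist: "distinct P"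
    and len_P: "length P = Suc (gdist (complete_edges X) line_adj (hd P) (last P))"
    using sp unfolding shortest_path_def by auto
  have ends: "hd P \<in> complete_edges X" "last P \<in> complete_edges X"
    using set_walk_subset[OF w] walk_not_Nil[OF w] by auto
  have "length P = 3" using len len_P gdist_line_adj_le_2[OF ends] by linarith
  then obtain e f g where P: "P = [e, f, g]"
    by (cases P; cases "tl P"; cases "tl (tl P)") auto
  have "e \<inter> g = {}"
  proof (rule ccontr)
    assume "e \<inter> g \<noteq> {}"
    then have "walk (complete_edges X) line_adj [e, g]"
      using w dist P unfolding line_adj_def by auto
    from gdist_le_length[OF this] show False using len_P P by simp
  qed
  moreover have "e \<inter> f \<noteq> {}" "f \<inter> g \<noteq> {}" using w P unfolding line_adj_def by auto
  ultimately show thesis using that P by blast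
qed

lemma shortest_path_line_adj_path3:
  assumes "e \<in> complete_edges X" "f \<in> complete_edges X" "g \<in> complete_edges X"
    and "e \<inter> f \<noteq> {}" "f \<inter> g \<noteq> {}" "e \<inter> g = {}"
  shows "shortest_path (complete_edges X) line_adj [e, f, g]"
proof -
  have "e \<noteq> f" "f \<noteq> g" "e \<noteq> g" using assms(4-6) by auto
  moreover have "walk (complete_edges X) line_adj [e, f, g]"
    using assms calculation unfolding line_adj_def by auto
  ultimately show ?thesis
    unfolding shortest_path_def using gdist_line_adj_disjoint[OF assms(1,3,6)] by simp
qed

lemma gp_set_complete_edges_iff:
  "gp_set (complete_edges X) line_adj S \<longleftrightarrow> S \<subseteq> complete_edges X \<and> P4_free S"
proof (intro iffI conjI)
  assume gp: "gp_set (complete_edges X) line_adj S"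
  then show sub: "S \<subseteq> complete_edges X" unfolding gp_set_def by blast
  show "P4_free S"
    unfolding P4_free_iff_edge_triples[OF sub]
  proof (intro ballI impI notI)
    fix e f g assume efg: "e \<in> S" "f \<in> S" "g \<in> S" "e \<inter> f \<noteq> {}" "f \<inter> g \<noteq> {}" "e \<inter> g = {}"
    then have "shortest_path (complete_edges X) line_adj [e, f, g]"
      using sub by (intro shortest_path_line_adj_path3) auto
    moreover have "e \<noteq> f" "f \<noteq> g" "e \<noteq> g" using efg(4-6) by auto
    then have "\<not> (\<exists>P. shortest_path (complete_edges X) line_adj P \<and> e \<in> set P \<and> f \<in> set P \<and> g \<in> set P)"
      using gp efg(1-3) unfolding gp_set_def by blast
    moreover have "e \<in> set [e, f, g]" "f \<in> set [e, f, g]" "g \<in> set [e, f, g]" by simp_all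
    ultimately show False by blast
  qed
next
  assume "S \<subseteq> complete_edges X \<and> P4_free S"
  then have sub: "S \<subseteq> complete_edges X" and triples:
    "\<forall>e\<in>S. \<forall>f\<in>S. \<forall>g\<in>S. e \<inter> f \<noteq> {} \<longrightarrow> f \<inter> g \<noteq> {} \<longrightarrow> e \<inter> g \<noteq> {}"
    using P4_free_iff_edge_triples by blast+
  show "gp_set (complete_edges X) line_adj S"
    unfolding gp_set_def
  proof (intro conjI sub ballI impI notI, elim exE conjE)
    fix x y z P assume xyz: "x \<in> S" "y \<in> S" "z \<in> S" "x \<noteq> y" "y \<noteq> z" "x \<noteq> z"
      and sp: "shortest_path (complete_edges X) line_adj P" and on_P: "x \<in> set P" "y \<in> set P" "z \<in> set P"
    have three: "card {x, y, z} = 3" using xyz(4-6) by simp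
    have "card {x, y, z} \<le> card (set P)" using on_P by (intro card_mono) auto
    then have "3 \<le> length P" using three card_length[of P] by linarith
    then obtain e f g where P: "P = [e, f, g]" "e \<inter> f \<noteq> {}" "f \<inter> g \<noteq> {}" "e \<inter> g = {}"
      by (rule shortest_path_line_adj_cases[OF sp])
    have sub_efg: "{x, y, z} \<subseteq> {e, f, g}" using P(1) on_P by simp
    have "card {e, f, g} \<le> 3" by (simp add: card_insert_le_m1)
    moreover have "3 \<le> card {e, f, g}" using card_mono[OF _ sub_efg] three by simp
    ultimately have "{x, y, z} = {e, f, g}" using card_subset_eq[OF _ sub_efg] three by simp
    moreover have "{x, y, z} \<subseteq> S" using xyz(1-3) by simp
    ultimately have "e \<in> S" "f \<in> S" "g \<in> S" by simp_all
    then show False using triples[rule_format, of e f g] P(2-4) by simp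
  qed
qed

section \<open>Counting the edges of a P4-free graph\<close>

(* c and its neighbours form a star component of S. *)
definition star_center :: "'a set set \<Rightarrow> 'a \<Rightarrow> bool" where
  "star_center S c \<longleftrightarrow> (\<forall>t w. {c, t} \<in> S \<longrightarrow> {t, w} \<in> S \<longrightarrow> w = c)"

definition neighbours :: "'a set set \<Rightarrow> 'a \<Rightarrow> 'a set" where
  "neighbours S c = {t. {c, t} \<in> S}"

definition incident_edges :: "'a set set \<Rightarrow> 'a set \<Rightarrow> 'a set set" where
  "incident_edges S Y = {e \<in> S. e \<inter> Y \<noteq> {}}"

lemma star_center_if_leaf:
  assumes "P4_free S" "S \<subseteq> complete_edges X" "{p, q} \<in> S" "\<And>s. {p, s} \<in> S \<Longrightarrow> s = q"
  shows "star_center S q"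
  unfolding star_center_def
proof (intro allI impI)
  fix t w assume tw: "{q, t} \<in> S" "{t, w} \<in> S"
  show "w = q"
  proof (cases "t = p")
    case True
    then show ?thesis using assms(4) tw(2) by blast
  next
    case False
    have "q \<noteq> t" "t \<noteq> w" "p \<noteq> q"
      using edge_complete_edgesD[OF assms(2)] tw assms(3) by blast+
    have "{t, p} \<notin> S"
      using assms(4) \<open>q \<noteq> t\<close> by (auto simp: insert_commute)
    then have "w \<noteq> p" using tw(2) by blast
    show "w = q"
    proof (rule ccontr)
      assume "w \<noteq> q"
      have "{w, t} \<in> S" "{t, q} \<in> S" "{q, p} \<in> S"
        using tw assms(3) by (simp_all add: insert_commute)
      then show False
        using P4_freeD[OF assms(1), of w t q p] False \<open>q \<noteq> t\<close> \<open>t \<noteq> w\<close> \<open>p \<noteq> q\<close>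
          \<open>w \<noteq> p\<close> \<open>w \<noteq> q\<close>
        by auto
    qed
  qed
qed

lemma star_center_if_no_triangle:
  assumes "P4_free S" "S \<subseteq> complete_edges X" "{p, q} \<in> S" "\<nexists>r. {p, r} \<in> S \<and> {q, r} \<in> S"
    and "{p, s} \<in> S" "s \<noteq> q"
  shows "star_center S p"
  unfolding star_center_def
proof (intro allI impI)
  fix t w assume tw: "{p, t} \<in> S" "{t, w} \<in> S"
  note loopless = edge_complete_edgesD[OF assms(2)]
  show "w = p"
  proof (rule ccontr)
    assume "w \<noteq> p"
    show False
    proof (cases "t = q")
      case True
      then have "w \<noteq> s" "w \<noteq> q" using assms(4,5) tw loopless by (metis insert_commute)+
      then show False
        using P4_freeD[OF assms(1), of w q p s] True tw assms(3,5,6) \<open>w \<noteq> p\<close> loopless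
        by (simp add: insert_commute)
    next
      case False
      then have "w \<noteq> q" using assms(4) tw by (metis insert_commute)
      then show False
        using P4_freeD[OF assms(1), of w t p q] False tw assms(3) \<open>w \<noteq> p\<close> loopless
        by (simp add: insert_commute)
    qed
  qed
qed

lemma edge_in_triangle_or_star:
  assumes "P4_free S" "S \<subseteq> complete_edges X" "{p, q} \<in> S"
  shows "(\<exists>r. {p, r} \<in> S \<and> {q, r} \<in> S) \<or> star_center S p \<or> star_center S q"
  using star_center_if_no_triangle[OF assms] star_center_if_leaf[OF assms(1,2,3)] by blast

lemma incident_edges_star:
  assumes "S \<subseteq> complete_edges X" "star_center S c"
  shows "incident_edges S (insert c (neighbours S c)) = (\<lambda>t. {c, t}) ` neighbours S c"
proof (intro equalityI subsetI)
  fix e assume "e \<in> incident_edges S (insert c (neighbours S c))"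
  then obtain a where e: "e \<in> S" "a \<in> e" "a \<in> insert c (neighbours S c)"
    unfolding incident_edges_def by blast
  obtain b where b: "e = {a, b}"
    using complete_edges_elim[of e X a] assms(1) e(1,2) by blast
  show "e \<in> (\<lambda>t. {c, t}) ` neighbours S c"
  proof (cases "a = c")
    case True
    then have "b \<in> neighbours S c" using e(1) b unfolding neighbours_def by simp
    then show ?thesis using b True by blast
  next
    case False
    then have "a \<in> neighbours S c" using e(3) by blast
    moreover have "b = c"
      using calculation e(1) b assms(2) unfolding star_center_def neighbours_def by blast
    then have "e = {c, a}" using b by (simp add: insert_commute)
    ultimately show ?thesis by blast
  qed
next
  fix e assume "e \<in> (\<lambda>t. {c, t}) ` neighbours S c"
  then obtain t where "e = {c, t}" "{c, t} \<in> S" unfolding neighbours_def by blast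
  then show "e \<in> incident_edges S (insert c (neighbours S c))"
    unfolding incident_edges_def by blast
qed

lemma neighbours_subset:
  assumes "S \<subseteq> complete_edges X"
  shows "neighbours S c \<subseteq> X - {c}"
proof
  fix t assume "t \<in> neighbours S c"
  then have "{c, t} \<in> S" unfolding neighbours_def by simp
  then show "t \<in> X - {c}" using edge_complete_edgesD[OF assms] by blast
qed

lemma card_incident_edges_star:
  assumes "finite X" "S \<subseteq> complete_edges X" "star_center S c"
  shows "card (incident_edges S (insert c (neighbours S c))) + 1 \<le> card (insert c (neighbours S c))"
proof -
  have N: "neighbours S c \<subseteq> X - {c}" using neighbours_subset[OF assms(2)] .
  then have fin: "finite (neighbours S c)" using assms(1) finite_subset by blast
  have "c \<notin> neighbours S c" using N by blast
  then have "card (insert c (neighbours S c)) = card (neighbours S c) + 1" using fin by simp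
  moreover have "card ((\<lambda>t. {c, t}) ` neighbours S c) \<le> card (neighbours S c)"
    using card_image_le[OF fin] .
  ultimately show ?thesis unfolding incident_edges_star[OF assms(2,3)] by linarith
qed

lemma incident_edges_triangle:
  assumes "P4_free S" "S \<subseteq> complete_edges X" "{p, q} \<in> S" "{p, r} \<in> S" "{q, r} \<in> S"
  shows "incident_edges S {p, q, r} \<subseteq> {{p, q}, {p, r}, {q, r}}"
proof
  fix e assume "e \<in> incident_edges S {p, q, r}"
  then obtain u where u: "e \<in> S" "u \<in> e" "u \<in> {p, q, r}" unfolding incident_edges_def by blast
  then obtain v where v: "e = {u, v}" "u \<noteq> v"
    using complete_edges_elim[of e X u] assms(2) by blast
  have distinct: "p \<noteq> q" "p \<noteq> r" "q \<noteq> r"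
    using edge_complete_edgesD[OF assms(2)] assms(3-5) by blast+
  have sym: "{q, p} \<in> S" "{r, p} \<in> S" "{r, q} \<in> S" "{v, u} \<in> S"
    using assms(3-5) u(1) v(1) by (simp_all add: insert_commute)
  have "v \<in> {p, q, r}"
  proof (rule ccontr)
    assume v_out: "v \<notin> {p, q, r}"
    from u(3) consider "u = p" | "u = q" | "u = r" by blast
    then show False
    proof cases
      case 1
      then show False using P4_freeD[OF assms(1), of v p q r] sym assms(3,5) v_out distinct by simp
    next
      case 2
      then show False using P4_freeD[OF assms(1), of v q p r] sym assms(4) v_out distinct by simp
    next
      case 3
      then show False using P4_freeD[OF assms(1), of v r p q] sym assms(3) v_out distinct by simp
    qed
  qed
  then show "e \<in> {{p, q}, {p, r}, {q, r}}"
    using u(3) v by (auto simp: insert_commute)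
qed

lemma P4_free_sparse_vertex_set:
  assumes "finite X" "S \<subseteq> complete_edges X" "P4_free S" "S \<noteq> {}"
  obtains Y where "Y \<subseteq> X" "Y \<noteq> {}" "card (incident_edges S Y) \<le> card Y"
proof -
  obtain e where "e \<in> S" using assms(4) by blast
  then obtain p q where pq: "{p, q} \<in> S"
    using assms(2) unfolding complete_edges_def by blast
  have "p \<in> X" "q \<in> X" "p \<noteq> q" using edge_complete_edgesD[OF assms(2) pq] by simp_all
  consider (triangle) r where "{p, r} \<in> S" "{q, r} \<in> S" | (star) c where "c \<in> {p, q}" "star_center S c"
    using edge_in_triangle_or_star[OF assms(3,2) pq] by blast
  then show thesis
  proof cases
    case triangle
    have "r \<in> X" "p \<noteq> r" "q \<noteq> r"
      using edge_complete_edgesD[OF assms(2) triangle(1)] edge_complete_edgesD[OF assms(2) triangle(2)]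
      by simp_all
    have "card (incident_edges S {p, q, r}) \<le> card {{p, q}, {p, r}, {q, r}}"
      using incident_edges_triangle[OF assms(3,2) pq triangle] by (intro card_mono) simp_all
    also have "\<dots> \<le> 3" by (simp add: card_insert_le_m1)
    also have "\<dots> = card {p, q, r}" using \<open>p \<noteq> q\<close> \<open>p \<noteq> r\<close> \<open>q \<noteq> r\<close> by simp
    finally have "card (incident_edges S {p, q, r}) \<le> card {p, q, r}" .
    moreover have "{p, q, r} \<subseteq> X" using \<open>p \<in> X\<close> \<open>q \<in> X\<close> \<open>r \<in> X\<close> by simp
    ultimately show thesis using that[of "{p, q, r}"] by simp
  next
    case star
    have "insert c (neighbours S c) \<subseteq> X"
      using neighbours_subset[OF assms(2)] star(1) \<open>p \<in> X\<close> \<open>q \<in> X\<close> by blast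
    moreover have "card (incident_edges S (insert c (neighbours S c))) \<le> card (insert c (neighbours S c))"
      using card_incident_edges_star[OF assms(1,2) star(2)] by linarith
    ultimately show thesis using that by blast
  qed
qed

lemma Diff_incident_edges_subset:
  assumes "S \<subseteq> complete_edges X"
  shows "S - incident_edges S Y \<subseteq> complete_edges (X - Y)"
proof
  fix e assume e: "e \<in> S - incident_edges S Y"
  then have "e \<in> complete_edges X" using assms by blast
  then obtain a b where "e = {a, b}" "a \<in> X" "b \<in> X" "a \<noteq> b"
    unfolding complete_edges_iff by blast
  moreover have "e \<inter> Y = {}" using e unfolding incident_edges_def by blast
  ultimately show "e \<in> complete_edges (X - Y)" by simp
qed

lemma card_le_by_removal:
  assumes "finite X" "S \<subseteq> complete_edges X" "Y \<subseteq> X"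
    and "card (S - incident_edges S Y) \<le> card (X - Y)"
    and "card (incident_edges S Y) + k \<le> card Y"
  shows "card S + k \<le> card X"
proof -
  have "finite S" using assms(1,2) finite_complete_edges finite_subset by blast
  moreover have "incident_edges S Y \<subseteq> S" unfolding incident_edges_def by blast
  ultimately have "card (S - incident_edges S Y) = card S - card (incident_edges S Y)"
    "card (incident_edges S Y) \<le> card S"
    by (auto simp: card_Diff_subset finite_subset card_mono)
  moreover have "card (X - Y) = card X - card Y" "card Y \<le> card X"
    using assms(1,3) by (auto simp: card_Diff_subset finite_subset card_mono)
  ultimately show ?thesis using assms(4,5) by linarith
qed

(* Delete a triangle or a closed star: never more edges than vertices disappear. *)
lemma card_le_card_if_P4_free:
  assumes "finite X" "S \<subseteq> complete_edges X" "P4_free S"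
  shows "card S \<le> card X"
  using assms
proof (induction "card X" arbitrary: X S rule: less_induct)
  case less
  show ?case
  proof (cases "S = {}")
    case False
    then obtain Y where Y: "Y \<subseteq> X" "Y \<noteq> {}" "card (incident_edges S Y) \<le> card Y"
      using P4_free_sparse_vertex_set[OF less.prems] by blast
    have "card (X - Y) < card X"
      using Y(1,2) less.prems(1) by (intro psubset_card_mono) auto
    then have "card (S - incident_edges S Y) \<le> card (X - Y)"
      using less.hyps[OF _ _ Diff_incident_edges_subset[OF less.prems(2)]
          P4_free_subset[OF less.prems(3), of "S - incident_edges S Y"]] less.prems(1)
      by blast
    then show ?thesis
      using card_le_by_removal[OF less.prems(1,2) Y(1), of 0] Y(3) by simp
  qed simp
qed

lemma card_add_2_le_if_two_star_centers:
  assumes fin: "finite X" and sub: "S \<subseteq> complete_edges X" and "P4_free S"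
    and c: "c1 \<in> X" "c2 \<in> X" "c1 \<noteq> c2" "{c1, c2} \<notin> S" "star_center S c1" "star_center S c2"
  shows "card S + 2 \<le> card X"
proof -
  define Y1 where "Y1 = insert c1 (neighbours S c1)"
  define Y2 where "Y2 = insert c2 (neighbours S c2)"
  have Y_sub: "Y1 \<subseteq> X" "Y2 \<subseteq> X"
    using neighbours_subset[OF sub] c(1,2) unfolding Y1_def Y2_def by blast+
  have "Y1 \<inter> Y2 = {}"
  proof (rule ccontr)
    assume "Y1 \<inter> Y2 \<noteq> {}"
    then obtain x where x: "x = c1 \<or> {c1, x} \<in> S" "x = c2 \<or> {c2, x} \<in> S"
      unfolding Y1_def Y2_def neighbours_def by blast
    have "{c2, c1} \<notin> S" using c(4) by (simp add: insert_commute)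
    then have "{c1, x} \<in> S" "{x, c2} \<in> S"
      using x c(3,4) by (auto simp: insert_commute)
    then show False using c(3,5) unfolding star_center_def by blast
  qed
  then have "card (Y1 \<union> Y2) = card Y1 + card Y2"
    using Y_sub fin by (simp add: card_Un_disjoint finite_subset)
  moreover have "card (incident_edges S (Y1 \<union> Y2)) \<le> card (incident_edges S Y1) + card (incident_edges S Y2)"
  proof -
    have "incident_edges S (Y1 \<union> Y2) = incident_edges S Y1 \<union> incident_edges S Y2"
      unfolding incident_edges_def by blast
    then show ?thesis using card_Un_le by metis
  qed
  moreover have "card (incident_edges S Y1) + 1 \<le> card Y1" "card (incident_edges S Y2) + 1 \<le> card Y2"
    unfolding Y1_def Y2_def using card_incident_edges_star[OF fin sub] c(5,6) by blast+
  moreover have "card (S - incident_edges S (Y1 \<union> Y2)) \<le> card (X - (Y1 \<union> Y2))"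
    using Diff_incident_edges_subset[OF sub] P4_free_subset[OF \<open>P4_free S\<close>] fin
    by (intro card_le_card_if_P4_free) auto
  ultimately show ?thesis
    using card_le_by_removal[OF fin sub, of "Y1 \<union> Y2" 2] Y_sub by simp
qed

section \<open>The upper bound\<close>

lemma star_center_of_move_target:
  assumes "P4_free S" "P4_free (insert {y, z} (S - {{x, y}}))" "S \<subseteq> complete_edges X"
    and "{x, y} \<in> S" "z \<noteq> x" "z \<noteq> y" "{x, z} \<notin> S" "{y, z} \<notin> S"
  shows "star_center S z"
  unfolding star_center_def
proof (intro allI impI)
  fix r w assume rw: "{z, r} \<in> S" "{r, w} \<in> S"
  have "{z, x} \<notin> S" "{z, y} \<notin> S" using assms(7,8) by (simp_all add: insert_commute)
  then have r: "r \<noteq> x" "r \<noteq> y" using rw(1) by blast+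
  have "z \<noteq> r" "r \<noteq> w" "x \<noteq> y"
    using edge_complete_edgesD[OF assms(3)] rw assms(4) by blast+
  show "w = z"
  proof (rule ccontr)
    assume "w \<noteq> z"
    show False
    proof (cases "w = y")
      case True
      have "{y, r} \<in> S" "{r, z} \<in> S" using rw True by (simp_all add: insert_commute)
      then show False
        using P4_freeD[OF assms(1), of x y r z] assms(4-6) r \<open>z \<noteq> r\<close> \<open>x \<noteq> y\<close> by simp
    next
      case False
      have "{y, z} \<in> insert {y, z} (S - {{x, y}})" by simp
      moreover have "{z, r} \<in> insert {y, z} (S - {{x, y}})" "{r, w} \<in> insert {y, z} (S - {{x, y}})"
        using rw r by (auto simp: doubleton_eq_iff)
      ultimately show False
        using P4_freeD[OF assms(2), of y z r w] False r \<open>w \<noteq> z\<close> \<open>z \<noteq> r\<close> \<open>r \<noteq> w\<close> assms(6)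
        by simp
    qed
  qed
qed

lemma no_triangle_on_moved_edge:
  assumes "P4_free (insert {y, z} (S - {{x, y}}))" "S \<subseteq> complete_edges X"
    and "{x, y} \<in> S" "z \<noteq> x" "z \<noteq> y" "{y, z} \<notin> S"
  shows "\<nexists>r. {x, r} \<in> S \<and> {y, r} \<in> S"
proof
  assume "\<exists>r. {x, r} \<in> S \<and> {y, r} \<in> S"
  then obtain r where r: "{x, r} \<in> S" "{y, r} \<in> S" by blast
  have "r \<noteq> z" using r(2) assms(6) by blast
  have "x \<noteq> r" "y \<noteq> r" "x \<noteq> y" using edge_complete_edgesD[OF assms(2)] r assms(3) by blast+
  have "{x, r} \<in> insert {y, z} (S - {{x, y}})" "{r, y} \<in> insert {y, z} (S - {{x, y}})"
    using r \<open>x \<noteq> r\<close> \<open>y \<noteq> r\<close> by (auto simp: doubleton_eq_iff insert_commute)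
  then show False
    using P4_freeD[OF assms(1), of x r y z] \<open>r \<noteq> z\<close> \<open>x \<noteq> r\<close> \<open>y \<noteq> r\<close> \<open>x \<noteq> y\<close> assms(4,5)
    by simp
qed

(* Otherwise z and one of x, y would be non-adjacent star centres. *)
lemma large_P4_free_move_closes_triangle:
  assumes fin: "finite X" and sub: "S \<subseteq> complete_edges X" and P4: "P4_free S"
    and large: "card X \<le> card S + 1"
    and move: "{x, y} \<in> S" "z \<in> X" "z \<noteq> x" "z \<noteq> y" "{y, z} \<notin> S"
    and P4': "P4_free (insert {y, z} (S - {{x, y}}))"
  shows "{x, z} \<in> S"
proof (rule ccontr)
  assume "{x, z} \<notin> S"
  then have "star_center S z"
    using star_center_of_move_target[OF P4 P4' sub move(1,3,4)] move(5) by blast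
  moreover obtain c where c: "c \<in> {x, y}" "star_center S c"
    using edge_in_triangle_or_star[OF P4 sub move(1)] no_triangle_on_moved_edge[OF P4' sub move(1,3-5)]
    by blast
  moreover have "c \<in> X" "c \<noteq> z" "{c, z} \<notin> S"
    using c(1) edge_complete_edgesD[OF sub move(1)] move(3-5) \<open>{x, z} \<notin> S\<close> by auto
  ultimately have "card S + 2 \<le> card X"
    using card_add_2_le_if_two_star_centers[OF fin sub P4 _ move(2)] by blast
  then show False using large by linarith
qed

lemma legal_move_complete_edgesE:
  assumes "legal_move (complete_edges X) line_adj S S'" "S \<subseteq> complete_edges X"
  obtains x y z where "{x, y} \<in> S" "z \<in> X" "z \<noteq> x" "z \<noteq> y" "{y, z} \<notin> S"
    "S' = insert {y, z} (S - {{x, y}})" "P4_free S'"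
proof -
  obtain u v where uv: "u \<in> S" "v \<in> complete_edges X" "v \<notin> S" "u \<noteq> v" "u \<inter> v \<noteq> {}"
    "S' = insert v (S - {u})" "gp_set (complete_edges X) line_adj S'"
    using assms(1) unfolding legal_move_def line_adj_def by blast
  obtain y where y: "y \<in> u" "y \<in> v" using uv(5) by blast
  obtain x where x: "u = {y, x}" using complete_edges_elim[OF _ y(1)] uv(1) assms(2) by blast
  obtain z where z: "v = {y, z}" "z \<in> X" "y \<noteq> z" using complete_edges_elim[OF uv(2) y(2)] by blast
  have "z \<noteq> x" using uv(4) x z by auto
  then show thesis
    using that[of x y z] uv x z gp_set_complete_edges_iff by (auto simp: insert_commute)
qed

definition edge_rel :: "'a set set \<Rightarrow> ('a \<times> 'a) set" where
  "edge_rel S = {(p, q). {p, q} \<in> S}"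

lemma large_legal_move_invariant:
  assumes fin: "finite X" and gp: "gp_set (complete_edges X) line_adj S"
    and large: "card X \<le> card S + 1" and move: "legal_move (complete_edges X) line_adj S S'"
  shows "card S' = card S" "edge_rel S' \<subseteq> (edge_rel S)\<^sup>*"
proof -
  have sub: "S \<subseteq> complete_edges X" and "P4_free S" using gp gp_set_complete_edges_iff by blast+
  obtain x y z where xyz: "{x, y} \<in> S" "z \<in> X" "z \<noteq> x" "z \<noteq> y" "{y, z} \<notin> S"
    and S': "S' = insert {y, z} (S - {{x, y}})" "P4_free S'"
    using legal_move_complete_edgesE[OF move sub] by blast
  have "{x, z} \<in> S"
    using large_P4_free_move_closes_triangle[OF fin sub \<open>P4_free S\<close> large xyz] S' by simp
  have "finite S" using fin sub finite_complete_edges finite_subset by blast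
  then have "card S > 0" using xyz(1) card_gt_0_iff by blast
  then show "card S' = card S"
    using S'(1) xyz(1,5) \<open>finite S\<close> by (simp add: card_Diff_singleton)
  have "(x, y) \<in> edge_rel S" "(y, x) \<in> edge_rel S" "(x, z) \<in> edge_rel S" "(z, x) \<in> edge_rel S"
    using xyz(1) \<open>{x, z} \<in> S\<close> unfolding edge_rel_def by (simp_all add: insert_commute)
  then have "(y, z) \<in> (edge_rel S)\<^sup>*" "(z, y) \<in> (edge_rel S)\<^sup>*"
    by (meson r_into_rtrancl rtrancl_trans)+
  then show "edge_rel S' \<subseteq> (edge_rel S)\<^sup>*"
    unfolding S'(1) edge_rel_def by (auto simp: doubleton_eq_iff)
qed

(* Triangle-closing moves never join two components of S, but every edge of K_n is
   occupied at some time. *)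
lemma mobile_large_connected:
  assumes fin: "finite X" and mob: "mobile_gp_set (complete_edges X) line_adj S"
    and large: "card X \<le> card S + 1" and pq: "p \<in> X" "q \<in> X" "p \<noteq> q"
  shows "(p, q) \<in> (edge_rel S)\<^sup>*"
proof -
  obtain ts where ts: "ts \<noteq> []" "hd ts = S"
    "\<And>i. Suc i < length ts \<Longrightarrow> legal_move (complete_edges X) line_adj (ts ! i) (ts ! Suc i)"
    "complete_edges X \<subseteq> \<Union> (set ts)"
    using mob unfolding mobile_gp_set_def by blast
  have invariant: "gp_set (complete_edges X) line_adj (ts ! i) \<and> card (ts ! i) = card S
      \<and> edge_rel (ts ! i) \<subseteq> (edge_rel S)\<^sup>*" if "i < length ts" for i
    using that
  proof (induction i)
    case 0
    then show ?case using mob ts(1,2) by (auto simp: mobile_gp_set_def hd_conv_nth)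
  next
    case (Suc i)
    then have IH: "gp_set (complete_edges X) line_adj (ts ! i)" "card (ts ! i) = card S"
      "edge_rel (ts ! i) \<subseteq> (edge_rel S)\<^sup>*" by simp_all
    have move: "legal_move (complete_edges X) line_adj (ts ! i) (ts ! Suc i)" using ts(3) Suc.prems by blast
    then have "gp_set (complete_edges X) line_adj (ts ! Suc i)" unfolding legal_move_def by blast
    moreover have "card (ts ! Suc i) = card S"
      using large_legal_move_invariant(1)[OF fin IH(1) _ move] IH(2) large by simp
    moreover have "edge_rel (ts ! Suc i) \<subseteq> (edge_rel S)\<^sup>*"
      using large_legal_move_invariant(2)[OF fin IH(1) _ move] IH(2,3) large
      by (metis rtrancl_subset_rtrancl rtrancl_idemp subset_trans)
    ultimately show ?case by blast
  qed
  have "{p, q} \<in> complete_edges X" using pq by simp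
  then have "{p, q} \<in> \<Union> (set ts)" using ts(4) by blast
  then obtain i where "i < length ts" "{p, q} \<in> ts ! i"
    by (metis UnionE in_set_conv_nth)
  then show ?thesis using invariant unfolding edge_rel_def by blast
qed

lemma triangle_move_closed:
  assumes "P4_free S" "P4_free (insert {y, z} (S - {{x, y}}))" "S \<subseteq> complete_edges X"
    and "{x, y} \<in> S" "{x, z} \<in> S" "z \<noteq> y"
  shows "edge_rel S `` {x, y, z} \<subseteq> {x, y, z}"
proof
  fix b assume "b \<in> edge_rel S `` {x, y, z}"
  then obtain a where ab: "a \<in> {x, y, z}" "{a, b} \<in> S" unfolding edge_rel_def by blast
  note loopless = edge_complete_edgesD[OF assms(3)]
  show "b \<in> {x, y, z}"
  proof (rule ccontr)
    assume b: "b \<notin> {x, y, z}"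
    have xyz: "x \<noteq> y" "x \<noteq> z" using loopless assms(4,5) by blast+
    from ab(1) consider "a = x" | "a = y" | "a = z" by blast
    then show False
    proof cases
      case 1
      have "{y, z} \<in> insert {y, z} (S - {{x, y}})" by simp
      moreover have "{z, x} \<in> insert {y, z} (S - {{x, y}})" "{x, b} \<in> insert {y, z} (S - {{x, y}})"
        using assms(5,6) ab(2) 1 b by (auto simp: doubleton_eq_iff insert_commute)
      ultimately show False
        using P4_freeD[OF assms(2), of y z x b] b xyz assms(6) by auto
    next
      case 2
      then show False
        using P4_freeD[OF assms(1), of b y x z] ab(2) b xyz assms(4-6)
        by (auto simp: insert_commute)
    next
      case 3
      then show False
        using P4_freeD[OF assms(1), of b z x y] ab(2) b xyz assms(4-6)
        by (auto simp: insert_commute)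
    qed
  qed
qed

lemma not_subset_if_card_less: "finite A \<Longrightarrow> card A < card X \<Longrightarrow> \<not> X \<subseteq> A"
  by (meson card_mono not_le)

lemma mobile_gp_set_complete_edges_card_le:
  assumes fin: "finite X" and four: "4 \<le> card X"
    and mob: "mobile_gp_set (complete_edges X) line_adj S"
  shows "card S + 2 \<le> card X"
proof (rule ccontr)
  assume "\<not> card S + 2 \<le> card X"
  then have large: "card X \<le> card S + 1" by simp
  have sub: "S \<subseteq> complete_edges X" and P4: "P4_free S"
    using mob gp_set_complete_edges_iff unfolding mobile_gp_set_def by blast+
  have "\<not> complete_edges X \<subseteq> S"
    using P4_free_subset[OF P4] not_P4_free_complete_edges[OF four] by blast
  then obtain S' where "legal_move (complete_edges X) line_adj S S'"
    by (rule mobile_gp_set_legal_move[OF mob])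
  then obtain x y z where xyz: "{x, y} \<in> S" "z \<in> X" "z \<noteq> x" "z \<noteq> y" "{y, z} \<notin> S"
    and S': "S' = insert {y, z} (S - {{x, y}})" "P4_free S'"
    by (rule legal_move_complete_edgesE[OF _ sub])
  from S' have P4': "P4_free (insert {y, z} (S - {{x, y}}))" by simp
  have "{x, z} \<in> S"
    using large_P4_free_move_closes_triangle[OF fin sub P4 large xyz P4'] .
  have "card {x, y, z} \<le> 3" by (simp add: card_insert_le_m1)
  then have "\<not> X \<subseteq> {x, y, z}" using not_subset_if_card_less[of "{x, y, z}" X] four by simp
  then obtain w where w: "w \<in> X" "w \<notin> {x, y, z}" by blast
  have "x \<in> X" using edge_complete_edgesD[OF sub xyz(1)] by blast
  then have "(x, w) \<in> (edge_rel S)\<^sup>*"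
    using mobile_large_connected[OF fin mob large] w by blast
  moreover have "(edge_rel S)\<^sup>* `` {x, y, z} = {x, y, z}"
    using Image_closed_trancl triangle_move_closed[OF P4 P4' sub xyz(1) \<open>{x, z} \<in> S\<close> xyz(4)]
    by blast
  ultimately show False using w by blast
qed

section \<open>Mobile stars\<close>

definition star_edges :: "'a \<Rightarrow> 'a set \<Rightarrow> 'a set set" where
  "star_edges c L = (\<lambda>v. {c, v}) ` L"

lemma inj_doubleton: "inj (\<lambda>v. {c, v})"
  by (auto intro: injI simp: doubleton_eq_iff)

lemma doubleton_in_star_edges_iff [simp]: "{c, v} \<in> star_edges c L \<longleftrightarrow> v \<in> L"
  unfolding star_edges_def using inj_doubleton[of c] by (auto dest: injD)

lemma star_edges_insert: "star_edges c (insert v L) = insert {c, v} (star_edges c L)"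
  unfolding star_edges_def by simp

lemma star_edges_Diff: "star_edges c (A - B) = star_edges c A - star_edges c B"
  unfolding star_edges_def by (rule image_set_diff[OF inj_doubleton])

lemma star_edges_subset: "c \<in> X \<Longrightarrow> L \<subseteq> X - {c} \<Longrightarrow> star_edges c L \<subseteq> complete_edges X"
  unfolding star_edges_def by auto

lemma card_star_edges: "card (star_edges c L) = card L"
  unfolding star_edges_def by (rule card_image[OF inj_on_subset[OF inj_doubleton]]) simp

lemma P4_free_star_plus_edge:
  assumes "S \<subseteq> complete_edges X" "\<And>f. f \<in> S \<Longrightarrow> f \<noteq> e \<Longrightarrow> c \<in> f \<and> f \<inter> e = {}"
  shows "P4_free S"
  unfolding P4_free_iff_edge_triples[OF assms(1)]
proof (intro ballI impI notI)
  fix f g h assume fgh: "f \<in> S" "g \<in> S" "h \<in> S" "f \<inter> g \<noteq> {}" "g \<inter> h \<noteq> {}" "f \<inter> h = {}"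
  then show False
    using assms(2)[OF fgh(1)] assms(2)[OF fgh(2)] assms(2)[OF fgh(3)] by blast
qed

lemma gp_set_star_edges:
  assumes "c \<in> X" "L \<subseteq> X - {c}"
  shows "gp_set (complete_edges X) line_adj (star_edges c L)"
  unfolding gp_set_complete_edges_iff
  using star_edges_subset[OF assms] P4_free_star_plus_edge[of _ X "{}" c]
  by (auto simp: star_edges_def)

lemma gp_set_insert_star_edges:
  assumes "c \<in> X" "L \<subseteq> X - {c}" "l \<in> X - insert c L" "w \<in> X - insert c L" "l \<noteq> w"
  shows "gp_set (complete_edges X) line_adj (insert {l, w} (star_edges c L))"
proof -
  have sub: "insert {l, w} (star_edges c L) \<subseteq> complete_edges X"
    using star_edges_subset[OF assms(1,2)] assms(3-5) by simp
  show ?thesis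
    unfolding gp_set_complete_edges_iff
    using sub P4_free_star_plus_edge[OF sub, of "{l, w}" c] assms(3,4)
    by (auto simp: star_edges_def)
qed

lemma legal_move_star_swap:
  assumes "c \<in> X" "w \<in> X - {c}" "w' \<in> X - {c}" "w \<noteq> w'"
  shows "legal_move (complete_edges X) line_adj (star_edges c (X - {c, w})) (star_edges c (X - {c, w'}))"
  unfolding legal_move_def
proof (intro exI conjI)
  show "{c, w'} \<in> star_edges c (X - {c, w})" "{c, w} \<in> complete_edges X"
    "{c, w} \<notin> star_edges c (X - {c, w})" using assms by auto
  show "line_adj {c, w'} {c, w}" using assms by (simp add: line_adj_def doubleton_eq_iff)
  have "X - {c, w'} = insert w (X - {c, w} - {w'})" using assms by auto
  then show "star_edges c (X - {c, w'}) = insert {c, w} (star_edges c (X - {c, w}) - {{c, w'}})"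
    by (simp only: star_edges_insert star_edges_Diff) (simp add: star_edges_def)
  show "gp_set (complete_edges X) line_adj (star_edges c (X - {c, w'}))"
    using assms by (intro gp_set_star_edges) auto
qed

lemma legal_move_star_to_edge:
  assumes "c \<in> X" "w \<in> X - {c}" "l \<in> X - {c}" "l \<noteq> w"
  shows "legal_move (complete_edges X) line_adj (star_edges c (X - {c, w}))
    (insert {l, w} (star_edges c (X - {c, w, l})))"
  unfolding legal_move_def
proof (intro exI conjI)
  show "{c, l} \<in> star_edges c (X - {c, w})" "{l, w} \<in> complete_edges X" using assms by auto
  show "{l, w} \<notin> star_edges c (X - {c, w})" using assms by (auto simp: star_edges_def doubleton_eq_iff)
  show "line_adj {c, l} {l, w}" using assms by (simp add: line_adj_def doubleton_eq_iff)
  have "X - {c, w, l} = X - {c, w} - {l}" by auto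
  then show "insert {l, w} (star_edges c (X - {c, w, l})) = insert {l, w} (star_edges c (X - {c, w}) - {{c, l}})"
    by (simp only: star_edges_Diff) (simp add: star_edges_def)
  show "gp_set (complete_edges X) line_adj (insert {l, w} (star_edges c (X - {c, w, l})))"
    using assms by (intro gp_set_insert_star_edges) auto
qed

lemma mobile_star_edges:
  assumes fin: "finite X" and three: "3 \<le> card X" and c: "c \<in> X" "w0 \<in> X" "c \<noteq> w0"
  shows "mobile_gp_set (complete_edges X) line_adj (star_edges c (X - {c, w0}))"
proof (rule mobile_gp_setI[OF finite_complete_edges[OF fin]])
  let ?R = "legal_move (complete_edges X) line_adj"
  let ?S0 = "star_edges c (X - {c, w0})"
  show "line_adj f e" if "line_adj e f" for e f using that unfolding line_adj_def by blast
  show "gp_set (complete_edges X) line_adj ?S0" using gp_set_star_edges c by blast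
  have reach_star: "?R\<^sup>*\<^sup>* ?S0 (star_edges c (X - {c, w}))" if "w \<in> X - {c}" for w
    using legal_move_star_swap[OF c(1) _ that, of w0] c that by (cases "w = w0") auto
  fix e assume "e \<in> complete_edges X"
  then obtain a b where ab: "a \<in> X" "b \<in> X" "a \<noteq> b" "e = {a, b}" unfolding complete_edges_iff by blast
  show "\<exists>T. ?R\<^sup>*\<^sup>* ?S0 T \<and> e \<in> T"
  proof (cases "c \<in> e")
    case True
    then obtain v where v: "e = {c, v}" "v \<in> X" "c \<noteq> v"
      using complete_edges_elim[OF \<open>e \<in> complete_edges X\<close>] by blast
    have "\<not> X \<subseteq> {c, v}" using not_subset_if_card_less[of "{c, v}" X] three v(3) by simp
    then obtain w where "w \<in> X - {c, v}" by blast
    then show ?thesis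
      using reach_star[of w] v by (intro exI[of _ "star_edges c (X - {c, w})"]) (auto simp: star_edges_def)
  next
    case False
    then have "a \<in> X - {c}" "b \<in> X - {c}" using ab by auto
    then have "?R\<^sup>*\<^sup>* ?S0 (insert {a, b} (star_edges c (X - {c, b, a})))"
      using reach_star legal_move_star_to_edge[OF c(1)] ab(3) by (meson rtranclp.rtrancl_into_rtrancl)
    then show ?thesis using ab(4) by blast
  qed
qed

lemma mob_complete_edges:
  assumes fin: "finite X" and four: "4 \<le> card X"
  shows "mob (complete_edges X) line_adj = card X - 2"
proof -
  let ?M = "{S. mobile_gp_set (complete_edges X) line_adj S}"
  have "?M \<subseteq> Pow (complete_edges X)" by (auto simp: mobile_gp_set_def gp_set_def)
  then have "finite ?M" using finite_complete_edges[OF fin] finite_subset by blast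
  obtain T where "T \<subseteq> X" "card T = 2" using obtain_subset_with_card_n[of 2 X] four by auto
  then obtain c w where cw: "c \<in> X" "w \<in> X" "c \<noteq> w" by (auto simp: card_2_iff)
  have "star_edges c (X - {c, w}) \<in> ?M" using mobile_star_edges[OF fin _ cw] four by simp
  moreover have "card (star_edges c (X - {c, w})) = card X - 2"
    using cw fin by (simp add: card_star_edges)
  ultimately have "card X - 2 \<in> card ` ?M" by (metis image_eqI)
  moreover have "\<forall>k \<in> card ` ?M. k \<le> card X - 2"
    using mobile_gp_set_complete_edges_card_le[OF fin four] by fastforce
  ultimately show ?thesis unfolding mob_def using \<open>finite ?M\<close> by (intro Max_eqI) auto
qed

lemma Kn_edges_eq: "Kn_edges n = complete_edges {..<n}"
  unfolding Kn_edges_def complete_edges_def by simp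

theorem theorem3p2:
  fixes n :: nat
  assumes "n \<ge> 4"
  shows "mob (Kn_edges n) line_adj = n - 2"
  using mob_complete_edges[of "{..<n}"] assms by (simp add: Kn_edges_eq)

end
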